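(* Let $B$ be a compact metric space admitting a continuous minimal map, let $\Gamma$ be a graph containing a circle $C$, and let $E=B\times\Gamma$. Then there exist continuous maps $F:E\to E$ and $f:B\to B$ with $\mathrm{pr}_1\circ F=f\circ\mathrm{pr}_1$ (i.e., $F$ is fibre-preserving) such that $B\times C$ is a minimal set of $F$.
   Context: A graph is a nonempty compact metric space that is a union of finitely many arcs pairwise disjoint or meeting only at end-points; a circle is a simple closed curve. A continuous selfmap is minimal if it has no proper nonempty closed invariant subset (equivalently all forward orbits are dense); a minimal set of $F$ is a nonempty closed $F$-invariant set on which $F$ is minimal. *)

theory Defs
  imports "HOL-Analysis.Analysis"
begin

definition is_graph :: "'a::metric_space set \<Rightarrow> bool" where
  "is_graph G \<longleftrightarrow> G \<noteq> {} \<and>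
     (\<exists>A :: (real \<Rightarrow> 'a) set. finite A \<and> (\<forall>g\<in>A. arc g) \<and>
        G = (\<Union>g\<in>A. path_image g) \<and>
        (\<forall>g\<in>A. \<forall>h\<in>A. g \<noteq> h \<longrightarrow>
           path_image g \<inter> path_image h \<subseteq>
             {pathstart g, pathfinish g} \<inter> {pathstart h, pathfinish h}))"

definition is_circle :: "'a::topological_space set \<Rightarrow> bool" where
  "is_circle C \<longleftrightarrow> (\<exists>g. simple_path g \<and> pathfinish g = pathstart g \<and> path_image g = C)"

definition minimal_map :: "'a::topological_space set \<Rightarrow> ('a \<Rightarrow> 'a) \<Rightarrow> bool" where
  "minimal_map S f \<longleftrightarrow> f ` S \<subseteq> S \<and>
     (\<forall>A. A \<subseteq> S \<and> A \<noteq> {} \<and> closedin (top_of_set S) A \<and> f ` A \<subseteq> A \<longrightarrow> A = S)"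

definition minimal_set :: "('a::topological_space \<Rightarrow> 'a) \<Rightarrow> 'a set \<Rightarrow> bool" where
  "minimal_set F M \<longleftrightarrow> M \<noteq> {} \<and> closed M \<and> F ` M \<subseteq> M \<and> minimal_map M F"

end

theory Submission
  imports Defs
begin

text \<open>Choose \<alpha> on the unit circle S such that no power \<alpha> ^ n is an eigenvalue of the minimal map
  g with a continuous unimodular eigenfunction; this is possible because eigenfunctions of distinct
  eigenvalues are at uniform distance at least 1, so there are only countably many eigenvalues.
  Then the skew rotation (x, z) \<mapsto> (g x, \<alpha> z) of B \<times> S is minimal: the fibre rotations preserving
  a minimal subset M form a closed subgroup of S, which is either all of S, forcing M = B \<times> S, or a
  finite group of n-th roots of unity, in which case the n-th power of the fibre coordinate is a
  continuous eigenfunction for \<alpha> ^ n. Finally, a retraction of the graph onto the circle C,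
  followed by the rotation of C \<cong> S, gives the fibre map on \<Gamma>.\<close>

section \<open>Minimal sets\<close>

lemma minimal_map_closed_iff:
  assumes "closed S"
  shows "minimal_map S f \<longleftrightarrow>
    f ` S \<subseteq> S \<and> (\<forall>A. A \<subseteq> S \<and> A \<noteq> {} \<and> closed A \<and> f ` A \<subseteq> A \<longrightarrow> A = S)"
  unfolding minimal_map_def closedin_closed_eq[OF assms] by blast

lemma minimal_mapD:
  assumes "minimal_map S f" "closed S" "A \<subseteq> S" "A \<noteq> {}" "closed A" "f ` A \<subseteq> A"
  shows "A = S"
  using assms by (simp add: minimal_map_closed_iff)

lemma minimal_set_iff:
  "minimal_set F M \<longleftrightarrow> M \<noteq> {} \<and> closed M \<and> F ` M \<subseteq> M \<and>
     (\<forall>A. A \<subseteq> M \<and> A \<noteq> {} \<and> closed A \<and> F ` A \<subseteq> A \<longrightarrow> A = M)"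
proof (cases "closed M")
  case True
  then show ?thesis by (simp add: minimal_set_def minimal_map_closed_iff)
qed (simp add: minimal_set_def)

lemma minimal_map_image_eq:
  fixes f :: "'a::t2_space \<Rightarrow> 'a"
  assumes "compact S" "continuous_on S f" "minimal_map S f"
  shows "f ` S = S"
proof (cases "S = {}")
  case False
  have "closed (f ` S)"
    using compact_imp_closed[OF compact_continuous_image[OF assms(2,1)]] .
  moreover have "f ` S \<subseteq> S"
    using assms(3) by (simp add: minimal_map_def)
  ultimately show ?thesis
    using assms False by (auto simp: minimal_map_closed_iff compact_imp_closed image_mono)
qed simp

lemma chain_Inter_closed_invariant:
  fixes F :: "'a::t2_space \<Rightarrow> 'a"
  assumes "compact K" "\<D> \<noteq> {}"
    and \<D>: "\<And>D. D \<in> \<D> \<Longrightarrow> D \<subseteq> K \<and> D \<noteq> {} \<and> closed D \<and> F ` D \<subseteq> D"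
    and chain: "\<And>X Y. X \<in> \<D> \<Longrightarrow> Y \<in> \<D> \<Longrightarrow> X \<subseteq> Y \<or> Y \<subseteq> X"
  shows "\<Inter>\<D> \<subseteq> K \<and> \<Inter>\<D> \<noteq> {} \<and> closed (\<Inter>\<D>) \<and> F ` \<Inter>\<D> \<subseteq> \<Inter>\<D>"
proof (intro conjI)
  show "\<Inter>\<D> \<subseteq> K"
    using assms(2) \<D> by blast
  show "closed (\<Inter>\<D>)"
    using \<D> by (intro closed_Inter) blast
  show "F ` \<Inter>\<D> \<subseteq> \<Inter>\<D>"
    using \<D> by (fastforce simp: image_subset_iff)
  have "K \<inter> \<Inter>\<D> \<noteq> {}"
  proof (rule compact_imp_fip[OF assms(1)])
    show "closed D" if "D \<in> \<D>" for D
      using that \<D> by blast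
    fix \<F> assume "finite \<F>" "\<F> \<subseteq> \<D>"
    show "K \<inter> \<Inter>\<F> \<noteq> {}"
    proof (cases "\<F> = {}")
      case False
      have "subset.chain \<D> \<F>"
        unfolding subset_chain_def using chain \<open>\<F> \<subseteq> \<D>\<close> by (metis subsetD)
      then have "\<Inter>\<F> \<in> \<D>"
        using Inter_in_chain[OF \<open>finite \<F>\<close> False] \<open>\<F> \<subseteq> \<D>\<close> by (metis subsetD)
      then show ?thesis
        using \<D> by (simp add: Int_absorb1)
    qed (use assms(2) \<D> in blast)
  qed
  then show "\<Inter>\<D> \<noteq> {}"
    by blast
qed

lemma exists_minimal_set:
  fixes F :: "'a::t2_space \<Rightarrow> 'a"
  assumes "compact K" "K \<noteq> {}" "F ` K \<subseteq> K"
  obtains M where "M \<subseteq> K" "minimal_set F M"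
proof -
  define \<A> where "\<A> = {A. A \<subseteq> K \<and> A \<noteq> {} \<and> closed A \<and> F ` A \<subseteq> A}"
  \<comment> \<open>Zorn's lemma for the reverse inclusion, via complements.\<close>
  have "\<exists>U\<in>uminus ` \<A>. \<forall>X\<in>uminus ` \<A>. U \<subseteq> X \<longrightarrow> X = U"
  proof (rule subset_Zorn_nonempty)
    have "K \<in> \<A>"
      using assms by (simp add: \<A>_def compact_imp_closed)
    then show "uminus ` \<A> \<noteq> {}" by blast
  next
    fix \<C> assume "\<C> \<noteq> {}" and chain: "subset.chain (uminus ` \<A>) \<C>"
    define \<D> where "\<D> = uminus ` \<C>"
    have "\<D> \<subseteq> \<A>" "\<D> \<noteq> {}"
      using chain \<open>\<C> \<noteq> {}\<close> by (auto simp: \<D>_def subset_chain_def)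
    moreover have "X \<subseteq> Y \<or> Y \<subseteq> X" if XY: "X \<in> \<D>" "Y \<in> \<D>" for X Y
    proof -
      obtain U V where "U \<in> \<C>" "V \<in> \<C>" "X = - U" "Y = - V"
        using XY by (auto simp: \<D>_def)
      then show ?thesis
        using chain unfolding subset_chain_def by (metis Compl_subset_Compl_iff)
    qed
    ultimately have "\<Inter>\<D> \<in> \<A>"
      using chain_Inter_closed_invariant[OF assms(1), of \<D> F] by (auto simp: \<A>_def)
    moreover have "\<Union>\<C> = - \<Inter>\<D>"
      by (auto simp: \<D>_def)
    ultimately show "\<Union>\<C> \<in> uminus ` \<A>" by blast
  qed
  then obtain M where M: "M \<in> \<A>" and min: "\<And>A. A \<in> \<A> \<Longrightarrow> - M \<subseteq> - A \<Longrightarrow> A = M"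
    by fastforce
  have "minimal_set F M"
    unfolding minimal_set_iff using M min by (auto simp: \<A>_def)
  with M show ?thesis
    using that by (auto simp: \<A>_def)
qed

lemma minimal_set_homeomorphism:
  assumes hom: "homeomorphism X Y h k" and "closed X" and FX: "F ` X \<subseteq> X"
    and conj: "\<And>x. x \<in> X \<Longrightarrow> h (F x) = T (h x)" and "minimal_set T Y"
  shows "minimal_set F X"
proof -
  have hX: "h ` X = Y" and kh: "\<And>x. x \<in> X \<Longrightarrow> k (h x) = x"
    using hom by (auto simp: homeomorphism_def)
  have minY: "B = Y" if "B \<subseteq> Y" "B \<noteq> {}" "closedin (top_of_set Y) B" "T ` B \<subseteq> B" for B
    using \<open>minimal_set T Y\<close> that unfolding minimal_set_def minimal_map_def by blast
  have "X \<subseteq> A" if A: "A \<subseteq> X" "A \<noteq> {}" "closedin (top_of_set X) A" "F ` A \<subseteq> A" for A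
  proof
    fix x assume "x \<in> X"
    have "T ` h ` A \<subseteq> h ` A"
      using A(1,4) conj by (force simp: image_subset_iff)
    then have "h ` A = Y"
      using minY[of "h ` A"] homeomorphism_imp_closed_map[OF hom A(3)] A(1,2) hX by blast
    then obtain a where "a \<in> A" "h x = h a"
      using \<open>x \<in> X\<close> hX by (metis imageE imageI)
    then show "x \<in> A"
      using kh A(1) \<open>x \<in> X\<close> by (metis subsetD)
  qed
  moreover have "X \<noteq> {}"
    using \<open>minimal_set T Y\<close> hX by (auto simp: minimal_set_def)
  ultimately show ?thesis
    using FX \<open>closed X\<close> by (auto simp: minimal_set_def minimal_map_def)
qed

lemma homeomorphism_Times_snd:
  assumes "homeomorphism S T f g"
  shows "homeomorphism (A \<times> S) (A \<times> T) (\<lambda>p. (fst p, f (snd p))) (\<lambda>p. (fst p, g (snd p)))"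
proof -
  have f: "continuous_on S f" "f ` S = T" "\<And>x. x \<in> S \<Longrightarrow> g (f x) = x"
    and g: "continuous_on T g" "g ` T = S" "\<And>y. y \<in> T \<Longrightarrow> f (g y) = y"
    using assms by (auto simp: homeomorphism_def)
  have "continuous_on (A \<times> S) (\<lambda>p. f (snd p))"
    by (rule continuous_on_compose2[OF f(1) continuous_on_snd]) (auto intro: continuous_on_id)
  moreover have "continuous_on (A \<times> T) (\<lambda>p. g (snd p))"
    by (rule continuous_on_compose2[OF g(1) continuous_on_snd]) (auto intro: continuous_on_id)
  moreover have "(\<lambda>p. (fst p, f (snd p))) ` (A \<times> S) = A \<times> T"
  proof
    show "A \<times> T \<subseteq> (\<lambda>p. (fst p, f (snd p))) ` (A \<times> S)"
    proof clarify
      fix a y assume "a \<in> A" "y \<in> T"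
      then show "(a, y) \<in> (\<lambda>p. (fst p, f (snd p))) ` (A \<times> S)"
        using g(2,3) by (intro image_eqI[of _ _ "(a, g y)"]) auto
    qed
  qed (use f(2) in auto)
  moreover have "(\<lambda>p. (fst p, g (snd p))) ` (A \<times> T) = A \<times> S"
  proof
    show "A \<times> S \<subseteq> (\<lambda>p. (fst p, g (snd p))) ` (A \<times> T)"
    proof clarify
      fix a x assume "a \<in> A" "x \<in> S"
      then show "(a, x) \<in> (\<lambda>p. (fst p, g (snd p))) ` (A \<times> T)"
        using f(2,3) by (intro image_eqI[of _ _ "(a, f x)"]) auto
    qed
  qed (use g(2) in auto)
  ultimately show ?thesis
    unfolding homeomorphism_def using f(3) g(3)
    by (intro conjI continuous_on_Pair continuous_on_fst continuous_on_id) auto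
qed

section \<open>Unimodular numbers and closed subgroups of the circle\<close>

lemma unit_cnj_mult: "cmod z = 1 \<Longrightarrow> cnj z * z = 1"
  by (metis complex_norm_square mult.commute of_real_1 power_one)

lemma Im_mult_unimodular_gt:
  fixes r d :: complex
  assumes "cmod d = 1" "Re r > 0" "Re (d * r) > 0" "Im d > 0"
  shows "Im (d * r) > Im r"
proof -
  define x y a b where "x = Re r" "y = Im r" "a = Re d" "b = Im d"
  have d: "a\<^sup>2 + b\<^sup>2 = 1"
    using assms(1) unfolding x_y_a_b_def by (metis cmod_power2 one_power2)
  have pos: "x > 0" "a * x - b * y > 0" "b > 0"
    using assms(2-4) unfolding x_y_a_b_def by simp_all
  have "a\<^sup>2 \<le> 1"
    using d zero_le_power2[of b] by linarith
  then have "\<bar>a\<bar> \<le> 1"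
    by (simp add: abs_square_le_1)
  have "a * y + b * x > y"
  proof (cases "y \<le> 0")
    case True
    then have "(1 - a) * y \<le> 0"
      using \<open>\<bar>a\<bar> \<le> 1\<close> by (simp add: mult_nonneg_nonpos)
    moreover have "b * x > 0"
      using pos by simp
    ultimately show ?thesis
      by (simp add: algebra_simps)
  next
    case False
    have "1 + a > 0"
      using \<open>\<bar>a\<bar> \<le> 1\<close> d pos(3) by (cases "a = -1") auto
    have "(1 + a) * x > b * y"
      using pos by (simp add: algebra_simps)
    have "1 - a\<^sup>2 = b\<^sup>2"
      using d by linarith
    have "(1 + a) * ((1 - a) * y) = (1 - a\<^sup>2) * y"
      by (simp add: power2_eq_square algebra_simps)
    also have "\<dots> = b * (b * y)"
      unfolding \<open>1 - a\<^sup>2 = b\<^sup>2\<close> by (simp add: power2_eq_square)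
    also have "\<dots> < b * ((1 + a) * x)"
      using \<open>(1 + a) * x > b * y\<close> pos(3) by (rule mult_strict_left_mono)
    also have "\<dots> = (1 + a) * (b * x)"
      by (simp add: algebra_simps)
    finally have "b * x > (1 - a) * y"
      using \<open>1 + a > 0\<close> by simp
    then show ?thesis
      by (simp add: algebra_simps)
  qed
  then show ?thesis
    unfolding x_y_a_b_def by (simp add: algebra_simps)
qed

lemma Re_mult_cnj_pos_if_close:
  fixes z w :: complex
  assumes "cmod w = 1" "cmod (z - w) < 1"
  shows "Re (z * cnj w) > 0"
proof -
  have "1 - z * cnj w = (w - z) * cnj w"
    using unit_cnj_mult[OF assms(1)] by (simp add: algebra_simps)
  then have "cmod (1 - z * cnj w) < 1"
    using assms by (simp add: norm_mult norm_minus_commute)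
  then show ?thesis
    using complex_Re_le_cmod[of "1 - z * cnj w"] by simp
qed

text \<open>The point of a rotation-invariant set with largest imaginary part would otherwise move.\<close>

lemma rotation_of_compact_right_half_plane_set_eq_1:
  fixes R :: "complex set"
  assumes "compact R" "R \<noteq> {}" and Re_pos: "\<And>w. w \<in> R \<Longrightarrow> Re w > 0"
    and rot: "(\<lambda>w. \<delta> * w) ` R = R" and "cmod \<delta> = 1"
  shows "\<delta> = 1"
proof -
  obtain r where r: "r \<in> R" and r_max: "\<And>w. w \<in> R \<Longrightarrow> Im w \<le> Im r"
    using continuous_attains_sup[OF assms(1,2) continuous_on_Im[OF continuous_on_id]] by auto
  have "\<delta> * r \<in> R"
    using r rot by blast
  obtain w where w: "w \<in> R" "r = \<delta> * w"
    using r rot by (metis imageE)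
  then have w_eq: "w = cnj \<delta> * r"
    using unit_cnj_mult[OF \<open>cmod \<delta> = 1\<close>] by (simp add: mult.assoc[symmetric])
  consider "Im \<delta> > 0" | "Im \<delta> < 0" | "Im \<delta> = 0"
    by linarith
  then show ?thesis
  proof cases
    case 1
    have "Im (\<delta> * r) > Im r"
      using Im_mult_unimodular_gt[OF \<open>cmod \<delta> = 1\<close> Re_pos[OF r] Re_pos[OF \<open>\<delta> * r \<in> R\<close>] 1] .
    then show ?thesis
      using r_max[OF \<open>\<delta> * r \<in> R\<close>] by simp
  next
    case 2
    have "Im (cnj \<delta> * r) > Im r"
      using Im_mult_unimodular_gt[OF _ Re_pos[OF r], of "cnj \<delta>"] Re_pos[OF w(1)] w_eq 2 \<open>cmod \<delta> = 1\<close>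
      by simp
    then show ?thesis
      using r_max[OF w(1)] w_eq by simp
  next
    case 3
    then have "\<delta> = 1 \<or> \<delta> = -1"
      using \<open>cmod \<delta> = 1\<close> by (auto simp: complex_eq_iff cmod_def)
    moreover have "Re (-1 * r) \<le> 0"
      using Re_pos[OF r] by simp
    ultimately show ?thesis
      using Re_pos[OF \<open>\<delta> * r \<in> R\<close>] by fastforce
  qed
qed

lemma norm_1_minus_cis_mono:
  assumes "0 \<le> s" "s \<le> t" "t \<le> pi"
  shows "cmod (1 - cis s) \<le> cmod (1 - cis t)"
proof -
  have sq: "(cmod (1 - cis u))\<^sup>2 = 2 - 2 * cos u" for u
  proof -
    have "(cmod (1 - cis u))\<^sup>2 = (1 - cos u)\<^sup>2 + (sin u)\<^sup>2"
      by (simp add: cmod_power2)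
    also have "\<dots> = 2 - 2 * cos u"
      using sin_cos_squared_add[of u] by (simp add: power2_diff)
    finally show ?thesis .
  qed
  have "cos t \<le> cos s"
    using assms by (intro cos_monotone_0_pi_le) auto
  then have "(cmod (1 - cis s))\<^sup>2 \<le> (cmod (1 - cis t))\<^sup>2"
    by (simp add: sq)
  then show ?thesis
    by (rule power2_le_imp_le) simp
qed

lemma cis_powers_approximate:
  assumes "0 < t" "t \<le> pi" "cmod w = 1"
  obtains k :: nat where "cmod (cis t ^ k - w) \<le> cmod (cis t - 1)"
proof -
  define \<phi> where "\<phi> = Arg w + 2 * pi"
  have "w \<noteq> 0"
    using assms(3) by auto
  then have "w = cis \<phi>"
    using cis_Arg[of w] assms(3) by (simp add: \<phi>_def sgn_div_norm flip: cis_mult)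
  have "\<phi> > 0"
    using Arg_bounded[of w] by (simp add: \<phi>_def)
  define k where "k = nat \<lfloor>\<phi> / t\<rfloor>"
  have "real k \<le> \<phi> / t" "\<phi> / t < real k + 1"
    using \<open>\<phi> > 0\<close> assms(1) by (simp_all add: k_def)
  then have "real k * t \<le> \<phi>" "\<phi> < real k * t + t"
    using assms(1) by (simp_all add: field_simps)
  define s where "s = \<phi> - real k * t"
  have "cis t ^ k = cis (real k * t)"
    by (rule Complex.DeMoivre)
  then have "cis t ^ k - w = cis (real k * t) * (1 - cis s)"
    by (simp add: \<open>w = cis \<phi>\<close> s_def right_diff_distrib cis_mult)
  then have "cmod (cis t ^ k - w) = cmod (1 - cis s)"
    by (simp add: norm_mult)
  also have "\<dots> \<le> cmod (1 - cis t)"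
    using \<open>real k * t \<le> \<phi>\<close> \<open>\<phi> < real k * t + t\<close> assms(2)
    by (intro norm_1_minus_cis_mono) (auto simp: s_def)
  finally show ?thesis
    using that by (simp add: norm_minus_commute)
qed

lemma unimodular_neq_1_cis:
  fixes \<mu> :: complex
  assumes "cmod \<mu> = 1" "\<mu> \<noteq> 1"
  obtains t where "0 < t" "t \<le> pi" "\<mu> = cis t \<or> cnj \<mu> = cis t"
proof -
  have "\<mu> \<noteq> 0"
    using assms(1) by auto
  then have \<mu>: "\<mu> = cis (Arg \<mu>)"
    using cis_Arg[of \<mu>] assms(1) by (simp add: sgn_div_norm)
  then have "Arg \<mu> \<noteq> 0"
    using assms(2) by auto
  then consider "0 < Arg \<mu>" | "0 < - Arg \<mu>"
    by linarith
  then show ?thesis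
  proof cases
    case 1
    then show ?thesis
      using that Arg_bounded[of \<mu>] \<mu> by blast
  next
    case 2
    then show ?thesis
      using that[of "- Arg \<mu>"] Arg_bounded[of \<mu>] \<mu> by (metis cis_cnj less_eq_real_def minus_le_iff)
  qed
qed

lemma circle_subgroupD:
  fixes H :: "complex set"
  assumes "H \<subseteq> sphere 0 1" "H \<noteq> {}" and sub: "\<And>\<mu> \<nu>. \<mu> \<in> H \<Longrightarrow> \<nu> \<in> H \<Longrightarrow> \<mu> * cnj \<nu> \<in> H"
  shows "1 \<in> H" and "\<mu> \<in> H \<Longrightarrow> cnj \<mu> \<in> H" and "\<mu> \<in> H \<Longrightarrow> \<nu> \<in> H \<Longrightarrow> \<mu> * \<nu> \<in> H"
    and "\<mu> \<in> H \<Longrightarrow> \<mu> ^ k \<in> H"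
proof -
  have one: "1 \<in> H"
    using assms(1,2) sub by (metis all_not_in_conv mem_sphere_0 mult.commute subsetD unit_cnj_mult)
  have cnj: "cnj \<mu> \<in> H" if "\<mu> \<in> H" for \<mu>
    using sub[OF one that] by simp
  have mult: "\<mu> * \<nu> \<in> H" if "\<mu> \<in> H" "\<nu> \<in> H" for \<mu> \<nu>
    using sub[OF that(1) cnj[OF that(2)]] by simp
  show "1 \<in> H" by (fact one)
  show "\<mu> \<in> H \<Longrightarrow> cnj \<mu> \<in> H" by (fact cnj)
  show "\<mu> \<in> H \<Longrightarrow> \<nu> \<in> H \<Longrightarrow> \<mu> * \<nu> \<in> H" by (fact mult)
  show "\<mu> \<in> H \<Longrightarrow> \<mu> ^ k \<in> H"
    by (induction k) (use one mult in auto)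
qed

lemma infinite_circle_subgroup_near_1:
  fixes H :: "complex set"
  assumes "H \<subseteq> sphere 0 1" "infinite H" and sub: "\<And>\<mu> \<nu>. \<mu> \<in> H \<Longrightarrow> \<nu> \<in> H \<Longrightarrow> \<mu> * cnj \<nu> \<in> H"
    and "e > 0"
  obtains \<mu> where "\<mu> \<in> H" "\<mu> \<noteq> 1" "cmod (\<mu> - 1) < e"
proof -
  obtain x where "x islimpt H"
    using compact_sphere[of 0 1] assms(1,2) unfolding compact_eq_Bolzano_Weierstrass by blast
  then obtain h1 where h1: "h1 \<in> H" "h1 \<noteq> x" "dist h1 x < e/2"
    using \<open>e > 0\<close> unfolding islimpt_approachable by (meson half_gt_zero)
  then obtain h2 where h2: "h2 \<in> H" "h2 \<noteq> x" "dist h2 x < min (e/2) (dist h1 x)"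
    using \<open>x islimpt H\<close> \<open>e > 0\<close> unfolding islimpt_approachable
    by (metis min_less_iff_conj zero_less_dist_iff half_gt_zero)
  have "h1 \<noteq> h2" "dist h1 h2 < e"
    using h1 h2 dist_triangle_half_r[of x h1 e h2] by (auto simp: dist_commute)
  have "cnj h2 * h2 = 1"
    using h2(1) assms(1) by (intro unit_cnj_mult) auto
  then have "h1 * cnj h2 - 1 = (h1 - h2) * cnj h2"
    by (simp add: algebra_simps)
  then have "cmod (h1 * cnj h2 - 1) = cmod (h1 - h2)"
    using h2(1) assms(1) by (auto simp: norm_mult)
  moreover have "h1 * cnj h2 \<noteq> 1"
    using \<open>cnj h2 * h2 = 1\<close> \<open>h1 \<noteq> h2\<close> by (metis mult.assoc mult.right_neutral mult.left_neutral)
  ultimately show ?thesis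
    using that sub[OF h1(1) h2(1)] \<open>dist h1 h2 < e\<close> by (simp add: dist_norm)
qed

lemma closed_infinite_circle_subgroup_eq_sphere:
  fixes H :: "complex set"
  assumes "H \<subseteq> sphere 0 1" "closed H" "infinite H"
    and sub: "\<And>\<mu> \<nu>. \<mu> \<in> H \<Longrightarrow> \<nu> \<in> H \<Longrightarrow> \<mu> * cnj \<nu> \<in> H"
  shows "H = sphere 0 1"
proof
  have "H \<noteq> {}"
    using assms(3) by auto
  note subgroup = circle_subgroupD[OF assms(1) this sub]
  show "sphere 0 1 \<subseteq> H"
  proof
    fix w :: complex assume "w \<in> sphere 0 1"
    have "\<exists>h\<in>H. dist h w < e" if "e > 0" for e
    proof -
      obtain \<mu> where \<mu>: "\<mu> \<in> H" "\<mu> \<noteq> 1" "cmod (\<mu> - 1) < e"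
        using infinite_circle_subgroup_near_1[OF assms(1,3) sub \<open>e > 0\<close>] .
      moreover have "cmod \<mu> = 1"
        using \<mu>(1) assms(1) by auto
      ultimately obtain t where t: "0 < t" "t \<le> pi" "\<mu> = cis t \<or> cnj \<mu> = cis t"
        using unimodular_neq_1_cis by metis
      have "cmod (cnj \<mu> - 1) = cmod (\<mu> - 1)"
        by (metis complex_cnj_diff complex_cnj_one complex_mod_cnj)
      then have "cis t \<in> H" "cmod (cis t - 1) < e"
        using t \<mu> subgroup(2)[of \<mu>] by auto
      moreover obtain k where "cmod (cis t ^ k - w) \<le> cmod (cis t - 1)"
        using cis_powers_approximate t(1,2) \<open>w \<in> sphere 0 1\<close> by auto
      ultimately show ?thesis
        using subgroup(4) by (metis dist_norm le_less_trans)
    qed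
    then have "w \<in> closure H"
      by (auto simp: closure_approachable)
    then show "w \<in> H"
      using \<open>closed H\<close> by simp
  qed
qed (fact assms(1))

lemma finite_circle_subgroup_roots_of_unity:
  fixes H :: "complex set"
  assumes "finite H" "0 \<notin> H" and pow: "\<And>\<mu> k. \<mu> \<in> H \<Longrightarrow> \<mu> ^ k \<in> H"
  obtains n :: nat where "n \<ge> 1" "\<And>\<mu>. \<mu> \<in> H \<Longrightarrow> \<mu> ^ n = 1"
proof
  define N where "N = card H"
  show "fact N \<ge> (1::nat)"
    by simp
  fix \<mu> assume "\<mu> \<in> H"
  have root: "\<mu> ^ (j - i) = 1" if "i < j" "\<mu> ^ i = \<mu> ^ j" for i j
  proof -
    have "\<mu> ^ j = \<mu> ^ i * \<mu> ^ (j - i)"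
      using \<open>i < j\<close> by (simp flip: power_add)
    then show ?thesis
      using that(2) \<open>\<mu> \<in> H\<close> assms(2) by (metis mult_cancel_left1 power_not_zero)
  qed
  have "card ((\<lambda>k. \<mu> ^ k) ` {0..N}) \<le> N"
    unfolding N_def using pow \<open>\<mu> \<in> H\<close> assms(1) by (intro card_mono) auto
  then have "\<not> inj_on (\<lambda>k. \<mu> ^ k) {0..N}"
    by (intro pigeonhole) simp
  then obtain i j where "i \<le> N" "j \<le> N" "i < j" "\<mu> ^ i = \<mu> ^ j"
    unfolding inj_on_def by (metis atLeastAtMost_iff linorder_neqE_nat)
  then have "j - i dvd fact N" "\<mu> ^ (j - i) = 1"
    using root by (auto intro: dvd_fact)
  then show "\<mu> ^ fact N = 1"
    by (metis dvd_def power_mult power_one)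
qed

section \<open>Continuous eigenvalues\<close>

definition continuous_eigenvalue :: "'a::topological_space set \<Rightarrow> ('a \<Rightarrow> 'a) \<Rightarrow> complex \<Rightarrow> bool"
  where "continuous_eigenvalue B g \<beta> \<longleftrightarrow>
    (\<exists>\<psi>. continuous_on B \<psi> \<and> \<psi> ` B \<subseteq> sphere 0 1 \<and> (\<forall>x\<in>B. \<psi> (g x) = \<beta> * \<psi> x))"

lemma eigenvalue_unimodular:
  assumes "x \<in> B" "g x \<in> B" "\<psi> ` B \<subseteq> sphere 0 1" "\<forall>x\<in>B. \<psi> (g x) = \<beta> * \<psi> x"
  shows "cmod \<beta> = 1"
proof -
  have "cmod (\<psi> (g x)) = 1" "cmod (\<psi> x) = 1"
    using assms(1-3) by auto
  then show ?thesis
    using assms(1,4) by (simp add: norm_mult)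
qed

lemma continuous_eigenvalues_eq_if_eigenfunctions_close:
  fixes B :: "'a::topological_space set"
  assumes "compact B" "B \<noteq> {}" "g ` B = B"
    and \<psi>1: "continuous_on B \<psi>1" "\<psi>1 ` B \<subseteq> sphere 0 1" "\<forall>x\<in>B. \<psi>1 (g x) = \<beta>1 * \<psi>1 x"
    and \<psi>2: "continuous_on B \<psi>2" "\<psi>2 ` B \<subseteq> sphere 0 1" "\<forall>x\<in>B. \<psi>2 (g x) = \<beta>2 * \<psi>2 x"
    and close: "\<forall>x\<in>B. cmod (\<psi>1 x - \<psi>2 x) < 1"
  shows "\<beta>1 = \<beta>2"
proof -
  obtain x0 where "x0 \<in> B" "g x0 \<in> B"
    using assms(2,3) by blast
  then have unit: "cmod \<beta>1 = 1" "cmod \<beta>2 = 1"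
    using \<psi>1(2,3) \<psi>2(2,3) by (auto intro: eigenvalue_unimodular)
  define \<phi> where "\<phi> x = \<psi>1 x * cnj (\<psi>2 x)" for x
  define \<delta> where "\<delta> = \<beta>1 * cnj \<beta>2"
  have Re_pos: "Re (\<phi> x) > 0" if "x \<in> B" for x
    unfolding \<phi>_def using that close \<psi>2(2) by (intro Re_mult_cnj_pos_if_close) auto
  have "(\<lambda>w. \<delta> * w) ` \<phi> ` B = \<phi> ` B"
  proof -
    have "\<phi> (g x) = \<delta> * \<phi> x" if "x \<in> B" for x
      using that \<psi>1(3) \<psi>2(3) by (simp add: \<phi>_def \<delta>_def)
    then have "(\<lambda>w. \<delta> * w) ` \<phi> ` B = \<phi> ` g ` B"
      by (simp add: image_image)
    then show ?thesis
      using assms(3) by simp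
  qed
  moreover have "compact (\<phi> ` B)"
    unfolding \<phi>_def using \<psi>1(1) \<psi>2(1) assms(1)
    by (intro compact_continuous_image continuous_intros)
  moreover have "\<And>w. w \<in> \<phi> ` B \<Longrightarrow> Re w > 0"
    using Re_pos by auto
  moreover have "cmod \<delta> = 1"
    using unit by (simp add: \<delta>_def norm_mult)
  ultimately have "\<delta> = 1"
    using rotation_of_compact_right_half_plane_set_eq_1[of "\<phi> ` B" \<delta>] assms(2) by blast
  have "\<beta>1 = \<beta>1 * (cnj \<beta>2 * \<beta>2)"
    using unit_cnj_mult[OF unit(2)] by simp
  also have "\<dots> = \<delta> * \<beta>2"
    by (simp add: \<delta>_def mult.assoc)
  finally show ?thesis
    using \<open>\<delta> = 1\<close> by simp
qed

lemma compact_finite_nets: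
  fixes B :: "'a::metric_space set"
  assumes "compact B"
  obtains L :: "nat \<Rightarrow> 'a list"
  where "\<And>m. set (L m) \<subseteq> B" "\<And>m. B \<subseteq> (\<Union>y\<in>set (L m). ball y (1 / Suc m))"
proof -
  have "\<exists>ys. set ys \<subseteq> B \<and> B \<subseteq> (\<Union>y\<in>set ys. ball y (1 / Suc m))" for m
  proof -
    obtain N where "N \<subseteq> B" "finite N" "B \<subseteq> (\<Union>y\<in>N. ball y (1 / Suc m))"
      using compactE_image[OF assms, of B "\<lambda>y. ball y (1 / Suc m)"] by force
    then show ?thesis
      using finite_list by metis
  qed
  then show ?thesis
    using that by metis
qed

lemma close_on_net_imp_close:
  fixes f h :: "'a::metric_space \<Rightarrow> 'b::real_normed_vector"
  assumes "N \<subseteq> B" "B \<subseteq> (\<Union>y\<in>N. ball y r)"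
    and "\<And>x y. x \<in> B \<Longrightarrow> y \<in> B \<Longrightarrow> dist y x < r \<Longrightarrow> norm (f x - f y) < e"
    and "\<And>x y. x \<in> B \<Longrightarrow> y \<in> B \<Longrightarrow> dist y x < r \<Longrightarrow> norm (h x - h y) < e"
    and "\<And>y. y \<in> N \<Longrightarrow> norm (f y - h y) < e"
  shows "\<forall>x\<in>B. norm (f x - h x) < e + e + e"
proof
  fix x assume "x \<in> B"
  then obtain y where "y \<in> N" "dist y x < r"
    using assms(2) by (meson UN_E mem_ball subsetD)
  then have "norm (f x - f y) < e" "norm (h y - h x) < e"
    using assms(1,3,4) \<open>x \<in> B\<close> by (auto simp: norm_minus_commute)
  then show "norm (f x - h x) < e + e + e"
    using assms(5)[OF \<open>y \<in> N\<close>] by (meson norm_diff_triangle_less)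
qed

lemma floor_grid_eq_imp_cmod_diff_lt:
  fixes z w :: complex
  assumes "\<lfloor>8 * Re z\<rfloor> = \<lfloor>8 * Re w\<rfloor>" "\<lfloor>8 * Im z\<rfloor> = \<lfloor>8 * Im w\<rfloor>"
  shows "cmod (z - w) < 1/4"
proof -
  have "\<bar>Re z - Re w\<bar> < 1/8" "\<bar>Im z - Im w\<bar> < 1/8"
    using assms by linarith+
  then show ?thesis
    using cmod_le[of "z - w"] by simp
qed

text \<open>Rounding the values on a finite net to a grid codes each function of a family of
  equicontinuous ones, up to uniform distance less than 1.\<close>

lemma countable_separated_continuous_family:
  fixes \<psi> :: "'i \<Rightarrow> 'a::metric_space \<Rightarrow> complex"
  assumes "compact B" and cont: "\<And>i. i \<in> I \<Longrightarrow> continuous_on B (\<psi> i)"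
    and sep: "\<And>i j. i \<in> I \<Longrightarrow> j \<in> I \<Longrightarrow> \<forall>x\<in>B. cmod (\<psi> i x - \<psi> j x) < 1 \<Longrightarrow> i = j"
  shows "countable I"
proof -
  obtain L where L: "\<And>m. set (L m) \<subseteq> B" "\<And>m. B \<subseteq> (\<Union>y\<in>set (L m). ball y (1 / Suc m))"
    using compact_finite_nets[OF assms(1)] by blast
  define I' where "I' m = {i \<in> I. \<forall>x\<in>B. \<forall>y\<in>B. dist y x < 1 / Suc m \<longrightarrow> cmod (\<psi> i x - \<psi> i y) < 1/4}"
    for m
  define code where "code m i = map (\<lambda>y. (\<lfloor>8 * Re (\<psi> i y)\<rfloor>, \<lfloor>8 * Im (\<psi> i y)\<rfloor>)) (L m)" for m i
  have "I \<subseteq> (\<Union>m. I' m)"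
  proof
    fix i assume "i \<in> I"
    then have "uniformly_continuous_on B (\<psi> i)"
      using compact_uniformly_continuous[OF cont assms(1)] by blast
    then obtain d where "d > 0"
      and d: "\<And>x y. x \<in> B \<Longrightarrow> y \<in> B \<Longrightarrow> dist y x < d \<Longrightarrow> dist (\<psi> i y) (\<psi> i x) < 1/4"
      by (rule uniformly_continuous_onE[where \<epsilon> = "1/4"]) auto
    obtain m :: nat where "1 / Suc m < d"
      using nat_approx_posE[OF \<open>d > 0\<close>] by blast
    then have "i \<in> I' m"
      using \<open>i \<in> I\<close> d by (force simp: I'_def dist_norm norm_minus_commute)
    then show "i \<in> (\<Union>m. I' m)" by blast
  qed
  moreover have "inj_on (code m) (I' m)" for m
  proof (rule inj_onI)
    fix i j assume i: "i \<in> I' m" and j: "j \<in> I' m" and "code m i = code m j"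
    have net: "cmod (\<psi> i y - \<psi> j y) < 1/4" if "y \<in> set (L m)" for y
      using \<open>code m i = code m j\<close> that
      by (intro floor_grid_eq_imp_cmod_diff_lt) (auto simp: code_def map_eq_conv)
    show "i = j"
    proof (rule sep)
      show "i \<in> I" "j \<in> I"
        using i j by (auto simp: I'_def)
      have "\<forall>x\<in>B. cmod (\<psi> i x - \<psi> j x) < 1/4 + 1/4 + 1/4"
        using i j net by (intro close_on_net_imp_close[OF L(1,2)]) (auto simp: I'_def)
      then show "\<forall>x\<in>B. cmod (\<psi> i x - \<psi> j x) < 1"
        by fastforce
    qed
  qed
  then have "countable (I' m)" for m
    by (rule countable_image_inj_on[OF countableI_type])
  ultimately show ?thesis
    by (meson countable_UN countable_subset UNIV_I countableI_type)
qed

lemma countable_continuous_eigenvalues: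
  fixes B :: "'a::metric_space set"
  assumes "compact B" "B \<noteq> {}" "g ` B = B"
  shows "countable {\<beta>. continuous_eigenvalue B g \<beta>}"
proof -
  define P where "P \<beta> \<psi> \<longleftrightarrow> continuous_on B \<psi> \<and> \<psi> ` B \<subseteq> sphere 0 1 \<and> (\<forall>x\<in>B. \<psi> (g x) = \<beta> * \<psi> x)"
    for \<beta> :: complex and \<psi> :: "'a \<Rightarrow> complex"
  have eigenfunction: "P \<beta> (SOME \<psi>. P \<beta> \<psi>)" if "continuous_eigenvalue B g \<beta>" for \<beta>
    using that unfolding continuous_eigenvalue_def P_def[symmetric] by (rule someI_ex)
  show ?thesis
  proof (rule countable_separated_continuous_family[OF assms(1)])
    fix \<beta>1 \<beta>2
    assume "\<beta>1 \<in> {\<beta>. continuous_eigenvalue B g \<beta>}" "\<beta>2 \<in> {\<beta>. continuous_eigenvalue B g \<beta>}"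
      and "\<forall>x\<in>B. cmod ((SOME \<psi>. P \<beta>1 \<psi>) x - (SOME \<psi>. P \<beta>2 \<psi>) x) < 1"
    then show "\<beta>1 = \<beta>2"
      using eigenfunction assms
      by (intro continuous_eigenvalues_eq_if_eigenfunctions_close) (auto simp: P_def)
  qed (use eigenfunction P_def in auto)
qed

lemma exists_unimodular_powers_avoiding:
  assumes "countable E"
  obtains \<mu> :: complex where "cmod \<mu> = 1" "\<And>n. n \<ge> 1 \<Longrightarrow> \<mu> ^ n \<notin> E"
proof -
  define Bad where "Bad = (\<Union>n\<in>{1..}. \<Union>\<beta>\<in>E. {z::complex. z ^ n = \<beta>})"
  have "countable Bad"
    unfolding Bad_def using assms
    by (intro countable_UN countableI_type) (auto intro!: countable_finite finite_nth_roots)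
  moreover have "uncountable (sphere (0::complex) 1)"
    by (rule connected_uncountable[of _ 1 "-1"]) (auto intro: connected_sphere)
  ultimately obtain \<mu> where "\<mu> \<in> sphere 0 1" "\<mu> \<notin> Bad"
    by (metis countable_subset subsetI)
  then show ?thesis
    using that by (auto simp: Bad_def)
qed

section \<open>Minimality of skew rotations\<close>

lemma continuous_on_through_compact_relation:
  fixes M :: "('a::metric_space \<times> 'b::metric_space) set" and h :: "'b \<Rightarrow> 'c::topological_space"
  assumes "compact M" "fst ` M = B" "continuous_on (snd ` M) h"
    and \<psi>: "\<And>x z. (x, z) \<in> M \<Longrightarrow> \<psi> x = h z"
  shows "continuous_on B \<psi>"
proof -
  have "closed (fst ` M)"
    using assms(1) by (intro compact_imp_closed compact_continuous_image continuous_intros)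
  then have "closed B"
    by (simp add: assms(2))
  have cont: "continuous_on M (\<lambda>p. h (snd p))"
    by (rule continuous_on_compose2[OF assms(3) continuous_on_snd[OF continuous_on_id]]) auto
  show ?thesis
    unfolding continuous_on_closed_vimage[OF \<open>closed B\<close>]
  proof (intro allI impI)
    fix Z :: "'c set" assume "closed Z"
    define S where "S = M \<inter> (\<lambda>p. h (snd p)) -` Z"
    have "closed S"
      unfolding S_def
      using continuous_closed_preimage[OF cont compact_imp_closed[OF assms(1)] \<open>closed Z\<close>] .
    then have "compact (M \<inter> S)"
      by (rule compact_Int_closed[OF assms(1)])
    then have "compact S"
      by (simp add: S_def)
    then have "closed (fst ` S)"
      by (intro compact_imp_closed compact_continuous_image continuous_intros)
    moreover have "\<psi> -` Z \<inter> B = fst ` S"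
    proof
      show "\<psi> -` Z \<inter> B \<subseteq> fst ` S"
        using assms(2) \<psi> by (auto simp: S_def image_iff)
      show "fst ` S \<subseteq> \<psi> -` Z \<inter> B"
        using assms(2) \<psi> by (auto simp: S_def)
    qed
    ultimately show "closed (\<psi> -` Z \<inter> B)"
      by simp
  qed
qed

definition skew_rotation :: "('a \<Rightarrow> 'a) \<Rightarrow> complex \<Rightarrow> 'a \<times> complex \<Rightarrow> 'a \<times> complex"
  where "skew_rotation g \<alpha> p = (g (fst p), \<alpha> * snd p)"

definition fibre_rotation :: "complex \<Rightarrow> 'a \<times> complex \<Rightarrow> 'a \<times> complex"
  where "fibre_rotation \<mu> p = (fst p, \<mu> * snd p)"

lemma skew_rotation_fibre_rotation_commute:
  "skew_rotation g \<alpha> (fibre_rotation \<mu> p) = fibre_rotation \<mu> (skew_rotation g \<alpha> p)"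
  by (simp add: skew_rotation_def fibre_rotation_def algebra_simps)

lemma fibre_rotation_mult: "fibre_rotation \<mu> (fibre_rotation \<nu> p) = fibre_rotation (\<mu> * \<nu>) p"
  by (simp add: fibre_rotation_def mult.assoc)

lemma fibre_rotation_1 [simp]: "fibre_rotation 1 p = p"
  by (simp add: fibre_rotation_def)

locale skew_rotation_minimal_set =
  fixes B :: "'a::metric_space set" and g :: "'a \<Rightarrow> 'a" and \<alpha> :: complex
    and M :: "('a \<times> complex) set"
  assumes compact_B: "compact B" and minimal_g: "minimal_map B g"
    and M_subset: "M \<subseteq> B \<times> sphere 0 1" and minimal_M: "minimal_set (skew_rotation g \<alpha>) M"
begin

definition rotations :: "complex set"
  where "rotations = {\<mu> \<in> sphere 0 1. fibre_rotation \<mu> ` M \<subseteq> M}"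

lemma M_ne: "M \<noteq> {}"
  and closed_M: "closed M"
  and M_minimal: "\<lbrakk>A \<subseteq> M; A \<noteq> {}; closed A; skew_rotation g \<alpha> ` A \<subseteq> A\<rbrakk> \<Longrightarrow> A = M"
  using minimal_M unfolding minimal_set_iff by blast+

lemma skew_rotation_in_M: "(x, z) \<in> M \<Longrightarrow> (g x, \<alpha> * z) \<in> M"
  using minimal_M unfolding minimal_set_def image_subset_iff
  by (metis fst_conv snd_conv skew_rotation_def)

lemma compact_M: "compact M"
proof -
  have "compact (B \<times> sphere 0 1 \<inter> M)"
    using compact_Int_closed[OF compact_Times[OF compact_B compact_sphere] closed_M] .
  then show ?thesis
    using M_subset by (simp add: Int_absorb1)
qed

lemma unit_in_M: "(x, z) \<in> M \<Longrightarrow> x \<in> B \<and> cmod z = 1"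
  using M_subset by auto

lemma fst_image_M: "fst ` M = B"
proof -
  have "closed (fst ` M)"
    using compact_M by (intro compact_imp_closed compact_continuous_image continuous_intros)
  moreover have "g ` fst ` M \<subseteq> fst ` M"
  proof
    fix y assume "y \<in> g ` fst ` M"
    then obtain x z where "(x, z) \<in> M" "y = g x"
      by auto
    then show "y \<in> fst ` M"
      using skew_rotation_in_M by (metis fst_conv image_eqI)
  qed
  moreover have "fst ` M \<subseteq> B" "fst ` M \<noteq> {}"
    using M_subset M_ne by auto
  ultimately show ?thesis
    using minimal_mapD[OF minimal_g compact_imp_closed[OF compact_B]] by blast
qed

text \<open>Fibre rotations commute with the skew rotation, so a rotated copy of the minimal set M
  is again minimal; hence it either contains M or is disjoint from it.\<close>

lemma subset_fibre_rotation_image: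
  assumes "fibre_rotation \<mu> ` M \<inter> M \<noteq> {}"
  shows "M \<subseteq> fibre_rotation \<mu> ` M"
proof -
  have "closed (fibre_rotation \<mu> ` M)"
    unfolding fibre_rotation_def
    using compact_M by (intro compact_imp_closed compact_continuous_image continuous_intros)
  moreover have "skew_rotation g \<alpha> ` fibre_rotation \<mu> ` M \<subseteq> fibre_rotation \<mu> ` M"
    using minimal_M by (auto simp: minimal_set_def image_image skew_rotation_fibre_rotation_commute)
  ultimately have "M \<inter> fibre_rotation \<mu> ` M = M"
    using assms minimal_M by (intro M_minimal) (auto simp: minimal_set_def)
  then show ?thesis
    by blast
qed

lemma fibre_quotient_in_rotations:
  assumes "(x, z1) \<in> M" "(x, z2) \<in> M"
  shows "z2 * cnj z1 \<in> rotations"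
proof -
  have unit: "cnj z1 * z1 = 1" "cnj z2 * z2 = 1"
    using assms unit_in_M unit_cnj_mult by blast+
  have "fibre_rotation (z1 * cnj z2) (x, z2) = (x, z1)"
    using unit by (simp add: fibre_rotation_def mult.assoc)
  then have "M \<subseteq> fibre_rotation (z1 * cnj z2) ` M"
    using assms by (intro subset_fibre_rotation_image) force
  then have "fibre_rotation (z2 * cnj z1) ` M \<subseteq> fibre_rotation (z2 * cnj z1 * (z1 * cnj z2)) ` M"
    by (auto simp: image_image fibre_rotation_mult)
  also have "z2 * cnj z1 * (z1 * cnj z2) = (cnj z1 * z1) * (cnj z2 * z2)"
    by (simp add: algebra_simps)
  also have "\<dots> = 1"
    using unit by simp
  finally show ?thesis
    using assms unit_in_M by (simp add: rotations_def norm_mult)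
qed

lemma rotations_subgroup: "\<mu> \<in> rotations \<Longrightarrow> \<nu> \<in> rotations \<Longrightarrow> \<mu> * cnj \<nu> \<in> rotations"
proof -
  assume "\<mu> \<in> rotations" "\<nu> \<in> rotations"
  obtain x z where "(x, z) \<in> M"
    using M_ne by auto
  then have "(x, \<nu> * z) \<in> M" "(x, \<mu> * z) \<in> M"
    using \<open>\<mu> \<in> rotations\<close> \<open>\<nu> \<in> rotations\<close> by (force simp: rotations_def fibre_rotation_def)+
  then have "\<mu> * z * cnj (\<nu> * z) \<in> rotations"
    by (rule fibre_quotient_in_rotations)
  have "cnj z * z = 1"
    using unit_cnj_mult unit_in_M \<open>(x, z) \<in> M\<close> by blast
  have "\<mu> * z * cnj (\<nu> * z) = \<mu> * cnj \<nu> * (cnj z * z)"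
    by (simp add: algebra_simps)
  also have "\<dots> = \<mu> * cnj \<nu>"
    using \<open>cnj z * z = 1\<close> by simp
  finally show ?thesis
    using \<open>\<mu> * z * cnj (\<nu> * z) \<in> rotations\<close> by metis
qed

lemma rotations_subset_sphere: "rotations \<subseteq> sphere 0 1"
  by (auto simp: rotations_def)

lemma closed_rotations: "closed rotations"
proof -
  have "rotations = sphere 0 1 \<inter> (\<Inter>p\<in>M. (\<lambda>\<mu>. fibre_rotation \<mu> p) -` M)"
    by (auto simp: rotations_def)
  moreover have "closed ((\<lambda>\<mu>. fibre_rotation \<mu> p) -` M)" for p
    unfolding fibre_rotation_def using closed_M
    by (intro continuous_closed_vimage) (auto intro!: continuous_intros)
  ultimately show ?thesis
    by (metis closed_INT closed_Int closed_sphere)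
qed

lemma eq_Times_sphere_if_infinite_rotations:
  assumes "infinite rotations"
  shows "M = B \<times> sphere 0 1"
proof
  have rotations: "rotations = sphere 0 1"
    using closed_infinite_circle_subgroup_eq_sphere[OF rotations_subset_sphere closed_rotations assms]
      rotations_subgroup by blast
  show "B \<times> sphere 0 1 \<subseteq> M"
  proof clarify
    fix x and w :: complex assume "x \<in> B" "w \<in> sphere 0 1"
    then obtain z where "(x, z) \<in> M"
      using fst_image_M by force
    then have "w * cnj z \<in> rotations" "cnj z * z = 1"
      using \<open>w \<in> sphere 0 1\<close> unit_in_M unit_cnj_mult by (auto simp: rotations norm_mult)
    then have "fibre_rotation (w * cnj z) (x, z) \<in> M"
      using \<open>(x, z) \<in> M\<close> by (auto simp: rotations_def)
    then show "(x, w) \<in> M"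
      using \<open>cnj z * z = 1\<close> by (simp add: fibre_rotation_def mult.assoc)
  qed
qed (fact M_subset)

lemma fibre_powers_eq_if_finite_rotations:
  assumes "finite rotations"
  obtains n :: nat where "n \<ge> 1" "\<And>x z1 z2. (x, z1) \<in> M \<Longrightarrow> (x, z2) \<in> M \<Longrightarrow> z2 ^ n = z1 ^ n"
proof -
  obtain x z where "(x, z) \<in> M"
    using M_ne by auto
  then have "rotations \<noteq> {}"
    using fibre_quotient_in_rotations by blast
  note subgroup = circle_subgroupD[OF rotations_subset_sphere this rotations_subgroup]
  have "0 \<notin> rotations"
    using rotations_subset_sphere by auto
  then obtain n :: nat where "n \<ge> 1" and roots: "\<And>\<mu>. \<mu> \<in> rotations \<Longrightarrow> \<mu> ^ n = 1"
    using finite_circle_subgroup_roots_of_unity[OF assms _ subgroup(4)] by blast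
  have "z2 ^ n = z1 ^ n" if "(x, z1) \<in> M" "(x, z2) \<in> M" for x z1 z2
  proof -
    have "(z2 * cnj z1) ^ n = 1" "cnj z1 * z1 = 1"
      using roots[OF fibre_quotient_in_rotations[OF that]] unit_in_M unit_cnj_mult that(1) by blast+
    have "z2 ^ n = z2 ^ n * (cnj z1 * z1) ^ n"
      using \<open>cnj z1 * z1 = 1\<close> by simp
    also have "\<dots> = (z2 * cnj z1) ^ n * z1 ^ n"
      by (simp add: power_mult_distrib algebra_simps)
    finally show ?thesis
      using \<open>(z2 * cnj z1) ^ n = 1\<close> by simp
  qed
  with \<open>n \<ge> 1\<close> show ?thesis
    using that by blast
qed

lemma continuous_eigenvalue_if_finite_rotations:
  assumes "finite rotations"
  obtains n :: nat where "n \<ge> 1" "continuous_eigenvalue B g (\<alpha> ^ n)"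
proof -
  obtain n :: nat where "n \<ge> 1"
    and powers: "\<And>x z1 z2. (x, z1) \<in> M \<Longrightarrow> (x, z2) \<in> M \<Longrightarrow> z2 ^ n = z1 ^ n"
    using fibre_powers_eq_if_finite_rotations[OF assms] by blast
  define \<psi> where "\<psi> x = (SOME z. (x, z) \<in> M) ^ n" for x
  have \<psi>: "\<psi> x = z ^ n" if "(x, z) \<in> M" for x z
    unfolding \<psi>_def using powers[OF someI[of "\<lambda>z. (x, z) \<in> M", OF that] that] by simp
  have "continuous_on B \<psi>"
    by (rule continuous_on_through_compact_relation[OF compact_M fst_image_M, of "\<lambda>z. z ^ n"])
      (auto intro: \<psi> continuous_intros)
  moreover have "\<psi> ` B \<subseteq> sphere 0 1"
  proof
    fix w assume "w \<in> \<psi> ` B"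
    then obtain x z where "(x, z) \<in> M" "w = \<psi> x"
      using fst_image_M by force
    then show "w \<in> sphere 0 1"
      using \<psi> unit_in_M by (simp add: norm_power)
  qed
  moreover have "\<psi> (g x) = \<alpha> ^ n * \<psi> x" if "x \<in> B" for x
  proof -
    obtain z where "(x, z) \<in> M"
      using \<open>x \<in> B\<close> fst_image_M by force
    then show ?thesis
      using \<psi>[OF skew_rotation_in_M] \<psi> by (simp add: power_mult_distrib)
  qed
  ultimately show ?thesis
    using that \<open>n \<ge> 1\<close> unfolding continuous_eigenvalue_def by blast
qed

end

lemma skew_rotation_minimal:
  fixes B :: "'a::metric_space set"
  assumes "compact B" "B \<noteq> {}" "minimal_map B g"
    and no_eigenvalue: "\<And>n. n \<ge> 1 \<Longrightarrow> \<not> continuous_eigenvalue B g (\<alpha> ^ n)" and "cmod \<alpha> = 1"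
  shows "minimal_set (skew_rotation g \<alpha>) (B \<times> sphere 0 1)"
  unfolding minimal_set_iff
proof (intro conjI allI impI)
  have "compact (B \<times> sphere (0::complex) 1)"
    using assms(1) by (intro compact_Times compact_sphere)
  then show "closed (B \<times> sphere (0::complex) 1)"
    by (rule compact_imp_closed)
  show "B \<times> sphere (0::complex) 1 \<noteq> {}"
    using assms(2) by (auto intro: exI[of _ 1])
  have "g ` B \<subseteq> B"
    using assms(3) by (simp add: minimal_map_def)
  then show "skew_rotation g \<alpha> ` (B \<times> sphere 0 1) \<subseteq> B \<times> sphere 0 1"
    using \<open>cmod \<alpha> = 1\<close> by (auto simp: skew_rotation_def norm_mult)
  fix K assume K: "K \<subseteq> B \<times> sphere 0 1 \<and> K \<noteq> {} \<and> closed K \<and> skew_rotation g \<alpha> ` K \<subseteq> K"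
  have "compact (B \<times> sphere 0 1 \<inter> K)"
    using compact_Int_closed \<open>compact (B \<times> sphere 0 1)\<close> K by blast
  then have "compact K"
    using K by (simp add: Int_absorb1)
  then obtain M where "M \<subseteq> K" "minimal_set (skew_rotation g \<alpha>) M"
    using exists_minimal_set K by blast
  then interpret skew_rotation_minimal_set B g \<alpha> M
    unfolding skew_rotation_minimal_set_def using assms(1,3) K by blast
  have "infinite rotations"
  proof
    assume "finite rotations"
    then obtain n :: nat where "n \<ge> 1" "continuous_eigenvalue B g (\<alpha> ^ n)"
      by (rule continuous_eigenvalue_if_finite_rotations)
    then show False
      using no_eigenvalue by blast
  qed
  then show "K = B \<times> sphere 0 1"
    using eq_Times_sphere_if_infinite_rotations \<open>M \<subseteq> K\<close> K by blast
qed

lemma minimal_set_skew_product_conjugate_rotation: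
  fixes B :: "'a::metric_space set" and C :: "'b::metric_space set"
  assumes "compact B" "B \<noteq> {}" "minimal_map B g" "cmod \<alpha> = 1"
    and "\<And>n. n \<ge> 1 \<Longrightarrow> \<not> continuous_eigenvalue B g (\<alpha> ^ n)"
    and hom: "homeomorphism C (sphere 0 1) \<phi> \<psi>" and "G ` C \<subseteq> C"
    and conj: "\<And>y. y \<in> C \<Longrightarrow> \<phi> (G y) = \<alpha> * \<phi> y"
  shows "minimal_set (\<lambda>p. (g (fst p), G (snd p))) (B \<times> C)"
proof (rule minimal_set_homeomorphism[OF homeomorphism_Times_snd[OF hom]])
  have "compact C"
    using hom compact_continuous_image[OF _ compact_sphere] by (metis homeomorphism_def)
  then show "closed (B \<times> C)"
    using assms(1) by (intro compact_imp_closed compact_Times)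
  have "g ` B \<subseteq> B"
    using assms(3) by (simp add: minimal_map_def)
  then show "(\<lambda>p. (g (fst p), G (snd p))) ` (B \<times> C) \<subseteq> B \<times> C"
    using \<open>G ` C \<subseteq> C\<close> by auto
  show "(fst (g (fst p), G (snd p)), \<phi> (snd (g (fst p), G (snd p)))) =
      skew_rotation g \<alpha> (fst p, \<phi> (snd p))" if "p \<in> B \<times> C" for p
    using that conj by (auto simp: skew_rotation_def)
  show "minimal_set (skew_rotation g \<alpha>) (B \<times> sphere 0 1)"
    using skew_rotation_minimal assms(1-5) by blast
qed

section \<open>Circles in graphs\<close>

definition arc_decomposition :: "'a::metric_space set \<Rightarrow> (real \<Rightarrow> 'a) set \<Rightarrow> bool"
  where "arc_decomposition \<Gamma> A \<longleftrightarrow> finite A \<and> (\<forall>g\<in>A. arc g) \<and> \<Gamma> = (\<Union>g\<in>A. path_image g) \<and>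
     (\<forall>g\<in>A. \<forall>h\<in>A. g \<noteq> h \<longrightarrow>
        path_image g \<inter> path_image h \<subseteq> {pathstart g, pathfinish g} \<inter> {pathstart h, pathfinish h})"

lemma is_graph_iff_arc_decomposition: "is_graph \<Gamma> \<longleftrightarrow> \<Gamma> \<noteq> {} \<and> (\<exists>A. arc_decomposition \<Gamma> A)"
  by (simp add: is_graph_def arc_decomposition_def)

lemma arc_decomposition_interior_nbhd:
  assumes dec: "arc_decomposition \<Gamma> A" and "a \<in> A" "0 < t" "t < 1"
  obtains e where "e > 0" "\<Gamma> \<inter> ball (a t) e \<subseteq> path_image a"
proof -
  define D where "D = (\<Union>b\<in>A - {a}. path_image b)"
  have "closed D"
    using dec unfolding D_def arc_decomposition_def
    by (intro closed_UN) (auto intro: closed_path_image arc_imp_path)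
  have "a t \<notin> D"
  proof
    assume "a t \<in> D"
    then obtain b where "b \<in> A" "b \<noteq> a" "a t \<in> path_image b"
      by (auto simp: D_def)
    moreover have "a t \<in> path_image a"
      using \<open>0 < t\<close> \<open>t < 1\<close> by (auto simp: path_image_def)
    ultimately have "a t = a 0 \<or> a t = a 1"
      using dec \<open>a \<in> A\<close> unfolding arc_decomposition_def pathstart_def pathfinish_def by blast
    moreover have "inj_on a {0..1}"
      using dec \<open>a \<in> A\<close> by (auto simp: arc_decomposition_def intro: arc_imp_inj_on)
    ultimately show False
      using \<open>0 < t\<close> \<open>t < 1\<close> by (auto dest: inj_onD)
  qed
  then obtain e where "e > 0" "ball (a t) e \<subseteq> - D"
    using \<open>closed D\<close> by (metis open_Compl open_contains_ball ComplI)
  moreover have "\<Gamma> \<subseteq> path_image a \<union> D"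
    using dec by (auto simp: arc_decomposition_def D_def)
  ultimately show ?thesis
    using that by blast
qed

lemma circle_parametrization_through:
  fixes C :: "'a::metric_space set"
  assumes "is_circle C" "p \<in> C"
  obtains c s where "simple_path c" "pathfinish c = pathstart c" "path_image c = C"
    "0 < s" "s < 1" "c s = p"
proof -
  obtain c where c: "simple_path c" "pathfinish c = pathstart c" "path_image c = C"
    using assms(1) unfolding is_circle_def by blast
  obtain s where s: "s \<in> {0..1}" "c s = p"
    using assms(2) c(3) unfolding path_image_def by blast
  show ?thesis
  proof (cases "0 < s \<and> s < 1")
    case True
    then show ?thesis
      using that c s by blast
  next
    case False
    then have "c 1 = p"
      using s c(2) by (auto simp: pathfinish_def pathstart_def)
    moreover have "simple_path (shiftpath (1/2) c)"
      "pathfinish (shiftpath (1/2) c) = pathstart (shiftpath (1/2) c)"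
      using c by (auto intro: simple_path_shiftpath closed_shiftpath)
    moreover have "path_image (shiftpath (1/2) c) = C"
      using path_image_shiftpath[of "1/2" c] c by auto
    ultimately show ?thesis
      using that[of "shiftpath (1/2) c" "1/2"] by (simp add: shiftpath_def)
  qed
qed

lemma circle_local_arc:
  fixes C :: "'a::metric_space set"
  assumes "is_circle C" "p \<in> C" "e > 0"
  obtains u s v :: real and c :: "real \<Rightarrow> 'a"
  where "u < s" "s < v" "continuous_on {u..v} c" "inj_on c {u..v}" "c s = p"
    "c ` {u..v} \<subseteq> C \<inter> ball p e"
proof -
  obtain c s where c: "simple_path c" "pathfinish c = pathstart c" "path_image c = C"
    and s: "0 < s" "s < 1" "c s = p"
    using circle_parametrization_through[OF assms(1,2)] .
  have "continuous_on {0..1} c"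
    using c(1) by (simp add: simple_path_def path_def)
  then obtain \<delta> where "\<delta> > 0" and \<delta>: "\<And>x. x \<in> {0..1} \<Longrightarrow> dist x s < \<delta> \<Longrightarrow> dist (c x) p < e"
    using s \<open>e > 0\<close> unfolding continuous_on_iff by (metis atLeastAtMost_iff less_eq_real_def)
  define d where "d = min (\<delta>/2) (min (s/2) ((1 - s)/2))"
  have d_bounds: "0 < d" "d \<le> \<delta>/2" "d \<le> s/2" "d \<le> (1 - s)/2"
    using \<open>\<delta> > 0\<close> s unfolding d_def by (simp, meson min.cobounded1 min.cobounded2 order_trans)+
  have d: "0 < d" "d < \<delta>" "0 < s - d" "s + d < 1"
    using d_bounds \<open>\<delta> > 0\<close> \<open>0 < s\<close> \<open>s < 1\<close> by simp_all
  have sub: "{s - d..s + d} \<subseteq> {0<..<1}"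
    using d by auto
  show ?thesis
  proof (rule that[of "s - d" s "s + d" c])
    show "continuous_on {s - d..s + d} c"
      using \<open>continuous_on {0..1} c\<close> by (rule continuous_on_subset) (use d in auto)
    show "inj_on c {s - d..s + d}"
    proof (rule inj_onI)
      fix x y assume "x \<in> {s - d..s + d}" "y \<in> {s - d..s + d}" "c x = c y"
      then have "x \<in> {0<..<1}" "y \<in> {0<..<1}" "c x = c y"
        using sub by blast+
      then show "x = y"
        using c(1) unfolding simple_path_def loop_free_def by force
    qed
    show "c ` {s - d..s + d} \<subseteq> C \<inter> ball p e"
    proof
      fix y assume "y \<in> c ` {s - d..s + d}"
      then obtain x where x: "x \<in> {s - d..s + d}" "y = c x"
        by blast
      then have "x \<in> {0..1}" "dist x s < \<delta>"
        using sub d by (auto simp: dist_real_def)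
      then show "y \<in> C \<inter> ball p e"
        using c(3) x(2) \<delta> by (auto simp: path_image_def dist_commute)
    qed
  qed (use d s in auto)
qed

lemma arc_map_into_path_connected:
  fixes a :: "real \<Rightarrow> 'a::metric_space"
  assumes "arc a" "path_connected C" "e0 \<in> C" "e1 \<in> C"
  obtains h where "continuous_on (path_image a) h" "h ` path_image a \<subseteq> C"
    "h (pathstart a) = e0" "h (pathfinish a) = e1"
proof -
  obtain q where q: "path q" "path_image q \<subseteq> C" "pathstart q = e0" "pathfinish q = e1"
    using assms(2-4) unfolding path_connected_def by blast
  obtain ai where ai: "homeomorphism {0..1} (path_image a) a ai"
    using homeomorphism_arc[OF assms(1)] by blast
  then have ai: "continuous_on (path_image a) ai" "ai ` path_image a = {0..1}"
    "ai (pathstart a) = 0" "ai (pathfinish a) = 1"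
    by (auto simp: homeomorphism_def pathstart_def pathfinish_def)
  show ?thesis
  proof (rule that[of "q \<circ> ai"])
    show "continuous_on (path_image a) (q \<circ> ai)"
      using ai(1,2) q(1) by (intro continuous_on_compose) (auto simp: path_def)
    show "(q \<circ> ai) ` path_image a \<subseteq> C"
      unfolding image_comp[symmetric] ai(2) using q(2) by (simp add: path_image_def)
    show "(q \<circ> ai) (pathstart a) = e0" "(q \<circ> ai) (pathfinish a) = e1"
      using ai(3,4) q(3,4) by (simp_all add: pathstart_def pathfinish_def)
  qed
qed

lemma arc_decomposition_circle_preimage_nbhd:
  assumes dec: "arc_decomposition \<Gamma> A" and "is_circle C" "C \<subseteq> \<Gamma>" "a \<in> A"
    and t: "0 < t" "t < 1" "a t \<in> C"
  obtains \<eta> where "\<eta> > 0" "ball t \<eta> \<subseteq> a -` C"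
proof -
  obtain e where "e > 0" and e: "\<Gamma> \<inter> ball (a t) e \<subseteq> path_image a"
    using arc_decomposition_interior_nbhd[OF dec \<open>a \<in> A\<close> t(1,2)] .
  obtain u s v :: real and c
    where "u < s" "s < v" "continuous_on {u..v} c" "inj_on c {u..v}" "c s = a t"
    and c: "c ` {u..v} \<subseteq> C \<inter> ball (a t) e"
    using circle_local_arc[OF \<open>is_circle C\<close> t(3) \<open>e > 0\<close>] .
  have c_arc: "c ` {u..v} \<subseteq> path_image a"
    using c e \<open>C \<subseteq> \<Gamma>\<close> by blast
  have "arc a"
    using dec \<open>a \<in> A\<close> by (simp add: arc_decomposition_def)
  then obtain ai where "homeomorphism {0..1} (path_image a) a ai"
    by (rule homeomorphism_arc)
  then have ai: "continuous_on (path_image a) ai" "\<And>y. y \<in> path_image a \<Longrightarrow> a (ai y) = y"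
    "\<And>x. x \<in> {0..1} \<Longrightarrow> ai (a x) = x"
    by (auto simp: homeomorphism_def)
  define k where "k = ai \<circ> c"
  have "continuous_on {u..v} k"
    unfolding k_def using \<open>continuous_on {u..v} c\<close> continuous_on_subset[OF ai(1) c_arc]
    by (rule continuous_on_compose)
  moreover have "inj_on k {u..v}"
    using \<open>inj_on c {u..v}\<close> c_arc ai(2) unfolding k_def inj_on_def
    by (metis comp_apply image_subset_iff)
  ultimately have "open (k ` {u<..<v})"
    by (rule injective_into_1d_imp_open_map_UNIV[OF open_greaterThanLessThan]) auto
  moreover have "k s = t"
    using t ai(3) \<open>c s = a t\<close> by (simp add: k_def)
  ultimately obtain \<eta> where "\<eta> > 0" "ball t \<eta> \<subseteq> k ` {u<..<v}"
    using \<open>u < s\<close> \<open>s < v\<close> by (metis greaterThanLessThan_iff image_eqI open_contains_ball)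
  moreover have "k ` {u<..<v} \<subseteq> a -` C"
    using c c_arc ai(2) by (auto simp: k_def image_subset_iff)
  ultimately show ?thesis
    using that by (meson order_trans)
qed

lemma arc_decomposition_arc_subset_circle:
  assumes dec: "arc_decomposition \<Gamma> A" and "is_circle C" "C \<subseteq> \<Gamma>" "a \<in> A"
    and t: "0 < t" "t < 1" "a t \<in> C"
  shows "path_image a \<subseteq> C"
proof -
  define S where "S = {0<..<1} \<inter> a -` C"
  have "path a"
    using dec \<open>a \<in> A\<close> by (auto simp: arc_decomposition_def arc_imp_path)
  have "closed C"
    using \<open>is_circle C\<close> by (auto simp: is_circle_def intro: closed_path_image simple_path_imp_path)
  have "openin (top_of_set {0<..<1}) S"
    unfolding openin_contains_ball
  proof (intro conjI ballI)
    show "S \<subseteq> {0<..<1}"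
      by (auto simp: S_def)
    fix x assume "x \<in> S"
    then obtain \<eta> where "\<eta> > 0" "ball x \<eta> \<subseteq> a -` C"
      using arc_decomposition_circle_preimage_nbhd[OF dec \<open>is_circle C\<close> \<open>C \<subseteq> \<Gamma>\<close> \<open>a \<in> A\<close>]
      by (auto simp: S_def)
    then show "\<exists>\<epsilon>>0. ball x \<epsilon> \<inter> {0<..<1} \<subseteq> S"
      by (auto simp: S_def)
  qed
  moreover have "closedin (top_of_set {0<..<1}) S"
    unfolding S_def using \<open>path a\<close> \<open>closed C\<close>
    by (intro continuous_closedin_preimage) (auto simp: path_def intro: continuous_on_subset)
  moreover have "S \<noteq> {}"
    using t by (auto simp: S_def)
  ultimately have "S = {0<..<1}"
    using connected_Ioo[of 0 1] unfolding connected_clopen by blast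
  then have "closure {0<..<1} \<subseteq> {0..1} \<inter> a -` C"
    using \<open>path a\<close> \<open>closed C\<close> unfolding S_def path_def
    by (intro closure_minimal continuous_closed_preimage) auto
  then show ?thesis
    by (auto simp: path_image_def)
qed

lemma arc_decomposition_arc_to_circle:
  assumes dec: "arc_decomposition \<Gamma> A" and "is_circle C" "C \<subseteq> \<Gamma>" "a \<in> A" "c0 \<in> C"
  obtains h where "continuous_on (path_image a) h" "h ` path_image a \<subseteq> C"
    "\<And>y. y \<in> path_image a \<inter> C \<Longrightarrow> h y = y"
    "\<And>y. y \<in> {pathstart a, pathfinish a} \<Longrightarrow> h y = (if y \<in> C then y else c0)"
proof (cases "path_image a \<subseteq> C")
  case True
  show ?thesis
  proof (rule that[of id])
    show "\<And>y. y \<in> {pathstart a, pathfinish a} \<Longrightarrow> id y = (if y \<in> C then y else c0)"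
      using True pathstart_in_path_image pathfinish_in_path_image by fastforce
  qed (use True in auto)
next
  case False
  define v where "v y = (if y \<in> C then y else c0)" for y
  have "path_connected C"
    using \<open>is_circle C\<close> unfolding is_circle_def
    by (metis path_connected_path_image simple_path_imp_path)
  moreover have "arc a"
    using dec \<open>a \<in> A\<close> by (auto simp: arc_decomposition_def)
  ultimately obtain h where h: "continuous_on (path_image a) h" "h ` path_image a \<subseteq> C"
    "h (pathstart a) = v (pathstart a)" "h (pathfinish a) = v (pathfinish a)"
    using arc_map_into_path_connected \<open>c0 \<in> C\<close> by (metis v_def)
  have "y \<in> {pathstart a, pathfinish a}" if y: "y \<in> path_image a \<inter> C" for y
  proof -
    obtain t where "t \<in> {0..1}" "y = a t"
      using y by (auto simp: path_image_def)
    moreover have "\<not> (0 < t \<and> t < 1)"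
      using arc_decomposition_arc_subset_circle[OF dec \<open>is_circle C\<close> \<open>C \<subseteq> \<Gamma>\<close> \<open>a \<in> A\<close>] False y
        calculation(2) by blast
    ultimately show ?thesis
      by (auto simp: pathstart_def pathfinish_def)
  qed
  then show ?thesis
    using that[of h] h by (auto simp: v_def)
qed

lemma retract_of_finite_closed_Union:
  assumes "finite A" "S = (\<Union>a\<in>A. P a)" "T \<subseteq> S" and closed: "\<And>a. a \<in> A \<Longrightarrow> closed (P a)"
    and h: "\<And>a. a \<in> A \<Longrightarrow> continuous_on (P a) (h a)" "\<And>a. a \<in> A \<Longrightarrow> h a ` P a \<subseteq> T"
    and fix_T: "\<And>a y. a \<in> A \<Longrightarrow> y \<in> P a \<inter> T \<Longrightarrow> h a y = y"
    and agree: "\<And>a b y. a \<in> A \<Longrightarrow> b \<in> A \<Longrightarrow> y \<in> P a \<inter> P b \<Longrightarrow> h a y = h b y"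
  shows "T retract_of S"
proof -
  obtain r where r: "continuous_map (top_of_set S) (top_of_set T) r"
    and r_eq: "\<And>y a. a \<in> A \<Longrightarrow> y \<in> S \<inter> P a \<Longrightarrow> r y = h a y"
  proof (rule pasting_lemma_exists_closed[OF assms(1)])
    show "topspace (top_of_set S) \<subseteq> \<Union>(P ` A)"
      using assms(2) by simp
    fix a assume "a \<in> A"
    then have "P a \<subseteq> S"
      using assms(2) by blast
    then show "closedin (top_of_set S) (P a)"
      using closed \<open>a \<in> A\<close> by (simp add: closed_subset)
    show "continuous_map (subtopology (top_of_set S) (P a)) (top_of_set T) (h a)"
      using h \<open>a \<in> A\<close> \<open>P a \<subseteq> S\<close>
      by (simp add: subtopology_subtopology Int_absorb1 image_subset_iff_funcset)
  next
    fix a b y assume "a \<in> A" "b \<in> A" "y \<in> topspace (top_of_set S) \<inter> P a \<inter> P b"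
    then show "h a y = h b y"
      by (intro agree) auto
  qed auto
  have "r y = y" if y: "y \<in> T" for y
  proof -
    obtain a where "a \<in> A" "y \<in> P a"
      using y assms(2,3) by blast
    then show ?thesis
      using r_eq fix_T y assms(3) by auto
  qed
  then show ?thesis
    using r assms(3) unfolding retract_of_def retraction_def by auto
qed

lemma circle_retract_of_graph:
  fixes \<Gamma> C :: "'a::metric_space set"
  assumes "is_graph \<Gamma>" "is_circle C" "C \<subseteq> \<Gamma>"
  shows "C retract_of \<Gamma>"
proof -
  obtain A where dec: "arc_decomposition \<Gamma> A"
    using assms(1) is_graph_iff_arc_decomposition by blast
  then have A: "finite A" "\<Gamma> = (\<Union>a\<in>A. path_image a)" "\<And>a. a \<in> A \<Longrightarrow> arc a"
    and ends: "\<And>a b. \<lbrakk>a \<in> A; b \<in> A; a \<noteq> b\<rbrakk> \<Longrightarrow>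
       path_image a \<inter> path_image b \<subseteq> {pathstart a, pathfinish a} \<inter> {pathstart b, pathfinish b}"
    by (auto simp: arc_decomposition_def)
  obtain c0 where "c0 \<in> C"
    using assms(2) unfolding is_circle_def by (metis pathstart_in_path_image)
  have "\<forall>a\<in>A. \<exists>h. continuous_on (path_image a) h \<and> h ` path_image a \<subseteq> C \<and>
      (\<forall>y\<in>path_image a \<inter> C. h y = y) \<and>
      (\<forall>y\<in>{pathstart a, pathfinish a}. h y = (if y \<in> C then y else c0))"
    using arc_decomposition_arc_to_circle[OF dec assms(2,3) _ \<open>c0 \<in> C\<close>] by metis
  then obtain H where "\<forall>a\<in>A. continuous_on (path_image a) (H a) \<and> H a ` path_image a \<subseteq> C \<and>
      (\<forall>y\<in>path_image a \<inter> C. H a y = y) \<and>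
      (\<forall>y\<in>{pathstart a, pathfinish a}. H a y = (if y \<in> C then y else c0))"
    by (rule bchoice[elim_format]) blast
  then have H: "\<And>a. a \<in> A \<Longrightarrow> continuous_on (path_image a) (H a)"
    "\<And>a. a \<in> A \<Longrightarrow> H a ` path_image a \<subseteq> C"
    "\<And>a y. a \<in> A \<Longrightarrow> y \<in> path_image a \<inter> C \<Longrightarrow> H a y = y"
    "\<And>a y. a \<in> A \<Longrightarrow> y \<in> {pathstart a, pathfinish a} \<Longrightarrow> H a y = (if y \<in> C then y else c0)"
    by blast+
  show ?thesis
  proof (rule retract_of_finite_closed_Union[OF A(1,2) assms(3)])
    show "closed (path_image a)" if "a \<in> A" for a
      using A(3) that by (auto intro: closed_path_image arc_imp_path)
    show "H a y = H b y" if "a \<in> A" "b \<in> A" "y \<in> path_image a \<inter> path_image b" for a b y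
    proof (cases "a = b")
      case False
      then have "y \<in> {pathstart a, pathfinish a}" "y \<in> {pathstart b, pathfinish b}"
        using ends[of a b] that by blast+
      then show ?thesis
        using H(4) that(1,2) by presburger
    qed simp
  qed (use H(1-3) in auto)
qed

lemma circle_homeomorphic_sphere:
  assumes "is_circle (C :: 'a::t2_space set)"
  shows "C homeomorphic sphere (0::complex) 1"
  using assms homeomorphic_simple_path_image_circle[of _ 1 0] unfolding is_circle_def by auto

lemma graph_circle_rotation_extension:
  fixes \<Gamma> C :: "'a::metric_space set"
  assumes "is_graph \<Gamma>" "is_circle C" "C \<subseteq> \<Gamma>" "cmod \<alpha> = 1"
  obtains \<phi> \<psi> G where "homeomorphism C (sphere 0 1) \<phi> \<psi>" "continuous_on \<Gamma> G" "G ` \<Gamma> \<subseteq> C"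
    "\<And>y. y \<in> C \<Longrightarrow> \<phi> (G y) = \<alpha> * \<phi> y"
proof -
  obtain \<phi> \<psi> where hom: "homeomorphism C (sphere (0::complex) 1) \<phi> \<psi>"
    using circle_homeomorphic_sphere[OF assms(2)] unfolding homeomorphic_def by blast
  then have \<phi>: "\<phi> ` C = sphere 0 1" "\<psi> ` sphere 0 1 = C"
    "continuous_on C \<phi>" "continuous_on (sphere 0 1) \<psi>"
    "\<And>w. w \<in> sphere 0 1 \<Longrightarrow> \<phi> (\<psi> w) = w"
    by (auto simp: homeomorphism_def)
  obtain r where "retraction \<Gamma> C r"
    using circle_retract_of_graph[OF assms(1-3)] unfolding retract_of_def by blast
  then have r: "continuous_on \<Gamma> r" "r ` \<Gamma> \<subseteq> C" "\<And>y. y \<in> C \<Longrightarrow> r y = y"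
    by (simp_all add: retraction_def image_subset_iff_funcset)
  have rotate: "(\<lambda>y. \<alpha> * \<phi> (r y)) ` \<Gamma> \<subseteq> sphere 0 1"
  proof clarify
    fix y assume "y \<in> \<Gamma>"
    then have "\<phi> (r y) \<in> sphere 0 1"
      using r(2) \<phi>(1) by blast
    then show "\<alpha> * \<phi> (r y) \<in> sphere 0 1"
      using assms(4) by (simp add: norm_mult)
  qed
  show ?thesis
  proof (rule that[OF hom])
    have "continuous_on \<Gamma> (\<lambda>y. \<alpha> * \<phi> (r y))"
      using continuous_on_compose2[OF \<phi>(3) r(1,2)] by (intro continuous_intros)
    then show "continuous_on \<Gamma> (\<lambda>y. \<psi> (\<alpha> * \<phi> (r y)))"
      using continuous_on_compose2[OF \<phi>(4) _ rotate] by blast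
    have "(\<lambda>y. \<psi> (\<alpha> * \<phi> (r y))) ` \<Gamma> = \<psi> ` (\<lambda>y. \<alpha> * \<phi> (r y)) ` \<Gamma>"
      by (simp add: image_image)
    also have "\<dots> \<subseteq> C"
      using image_mono[OF rotate, of \<psi>] \<phi>(2) by simp
    finally show "(\<lambda>y. \<psi> (\<alpha> * \<phi> (r y))) ` \<Gamma> \<subseteq> C" .
    show "\<phi> (\<psi> (\<alpha> * \<phi> (r y))) = \<alpha> * \<phi> y" if "y \<in> C" for y
    proof -
      have "\<alpha> * \<phi> (r y) \<in> sphere 0 1"
        using rotate that assms(3) by (meson image_subset_iff subsetD)
      then show ?thesis
        using \<phi>(5) r(3)[OF that] by simp
    qed
  qed
qed

theorem corollary1:
  fixes B :: "'a::metric_space set" and \<Gamma> C :: "'b::metric_space set"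
  assumes "compact B" and "B \<noteq> {}"
    and "\<exists>g. continuous_on B g \<and> minimal_map B g"
    and "is_graph \<Gamma>" and "is_circle C" and "C \<subseteq> \<Gamma>"
  shows "\<exists>F f. continuous_on (B \<times> \<Gamma>) F \<and> F ` (B \<times> \<Gamma>) \<subseteq> B \<times> \<Gamma> \<and>
           continuous_on B f \<and> f ` B \<subseteq> B \<and>
           (\<forall>x\<in>B \<times> \<Gamma>. fst (F x) = f (fst x)) \<and>
           minimal_set F (B \<times> C)"
proof -
  obtain g where g: "continuous_on B g" "minimal_map B g"
    using assms(3) by blast
  then have "g ` B = B"
    using minimal_map_image_eq[OF assms(1)] by blast
  then have "countable {\<beta>. continuous_eigenvalue B g \<beta>}"
    by (rule countable_continuous_eigenvalues[OF assms(1,2)])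
  then obtain \<alpha> where "cmod \<alpha> = 1"
    and no_eigenvalue: "\<And>n. n \<ge> 1 \<Longrightarrow> \<not> continuous_eigenvalue B g (\<alpha> ^ n)"
    using exists_unimodular_powers_avoiding by (metis mem_Collect_eq)
  obtain \<phi> \<psi> G where hom: "homeomorphism C (sphere 0 1) \<phi> \<psi>"
    and G: "continuous_on \<Gamma> G" "G ` \<Gamma> \<subseteq> C" "\<And>y. y \<in> C \<Longrightarrow> \<phi> (G y) = \<alpha> * \<phi> y"
    using graph_circle_rotation_extension[OF assms(4-6) \<open>cmod \<alpha> = 1\<close>] by metis
  have "G ` \<Gamma> \<subseteq> \<Gamma>" "G ` C \<subseteq> C"
    using G(2) assms(6) by blast+
  define F where "F p = (g (fst p), G (snd p))" for p
  have "minimal_set F (B \<times> C)"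
    unfolding F_def using minimal_set_skew_product_conjugate_rotation
      [OF assms(1,2) g(2) \<open>cmod \<alpha> = 1\<close> _ hom \<open>G ` C \<subseteq> C\<close> G(3)] no_eigenvalue by blast
  moreover have "continuous_on (B \<times> \<Gamma>) F"
    unfolding F_def
    by (intro continuous_on_Pair continuous_on_compose2[OF g(1) continuous_on_fst]
        continuous_on_compose2[OF G(1) continuous_on_snd] continuous_on_id) auto
  moreover have "F ` (B \<times> \<Gamma>) \<subseteq> B \<times> \<Gamma>"
    using \<open>g ` B = B\<close> \<open>G ` \<Gamma> \<subseteq> \<Gamma>\<close> by (auto simp: F_def)
  ultimately show ?thesis
    using g(1) \<open>g ` B = B\<close> by (intro exI[of _ F] exI[of _ g]) (simp add: F_def)
qed

end
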